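(* Let $p=(p_i)_{i\in\mathbb{N}}$ be a cookie environment with $p_i\in[\frac12,1)$ for all $i$, and suppose $\delta=\sum_{i=1}^\infty(2p_i-1)<\infty$. Let $\nu(x)=\frac1x\mathbb{E}[(U_p(x)-x)^2]$. Then $\nu(x)\to2$ as $x\to\infty$, and there is a constant $C$ depending only on $p$ such that $|\nu(x)-2|\le C\log^4(x)/\sqrt x$ for all sufficiently large $x$.
   Context: For a cookie environment $p$, let $B_1,B_2,\dots$ be independent Bernoulli random variables with $\Pr[B_i=1]=p_i$ ($B_i=1$ is a "success", $B_i=0$ a "failure"). For a positive integer $x$, $U_p(x)=\inf\{k\in\mathbb{N}:\sum_{i=1}^k(1-B_i)=x\}-x$, i.e. the number of successes before the $x$-th failure. *)

theory Defs
  imports "HOL-Probability.Probability"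
begin

text \<open>Cookie environment p (0-based: p 0 is the first cookie). The sample space consists of
  sequences \<omega> :: nat \<Rightarrow> bool, \<omega> i = True meaning a success (B = 1) at step i;
  the coordinates are independent Bernoulli(p i).\<close>
definition cookie_space :: "(nat \<Rightarrow> real) \<Rightarrow> (nat \<Rightarrow> bool) measure" where
  "cookie_space p = (\<Pi>\<^sub>M i\<in>UNIV. measure_pmf (bernoulli_pmf (p i)))"

text \<open>U_p(x): number of successes before the x-th failure.\<close>
definition U_cookie :: "nat \<Rightarrow> (nat \<Rightarrow> bool) \<Rightarrow> nat" where
  "U_cookie x \<omega> = (LEAST k. card {i. i < k \<and> \<not> \<omega> i} = x) - x"

definition nu_cookie :: "(nat \<Rightarrow> real) \<Rightarrow> nat \<Rightarrow> real" where
  "nu_cookie p x = (1 / real x) *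
     (\<integral>\<omega>. (real (U_cookie x \<omega>) - real x)^2 \<partial>cookie_space p)"

end

theory Submission
  imports Defs
begin

text \<open>Let \<open>s\<close> and \<open>f\<close> count successes and failures up to time \<open>n\<close>, stopped at the
  \<open>x\<close>-th failure, and let \<open>D(t)\<close> and \<open>R(t)\<close> be the partial sums of \<open>2 p i - 1\<close> and of its
  square; both lie in \<open>[0, \<delta>]\<close>. Then \<open>M = s - f - D(s + f)\<close> and \<open>M\<^sup>2 - (s + f) + R(s + f)\<close>
  are martingales, so \<open>E[s + f]\<close> and \<open>E[M\<^sup>2]\<close> are at most \<open>\<delta> + 2x\<close>. Written in terms of \<open>M\<close>,
  \<open>(s - f)\<^sup>2 - 2f\<close> is a martingale plus \<open>2MD\<close> plus terms bounded by \<open>\<delta> + \<delta>\<^sup>2\<close>, and AM-GM gives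
  \<open>|2MD| \<le> M\<^sup>2/\<surd>x + \<delta>\<^sup>2\<surd>x\<close>; hence \<open>|E[(s - f)\<^sup>2 - 2f]| = O(\<surd>x)\<close> uniformly in \<open>n\<close>. The walk
  stops almost surely because \<open>E[s + f]\<close> stays bounded, and monotone and dominated convergence
  carry the bound over to \<open>(U - x)\<^sup>2\<close>: \<open>|\<nu>(x) - 2| = O(1/\<surd>x)\<close>.\<close>

section \<open>Functions of finitely many trials\<close>

definition cylinder :: "bool list \<Rightarrow> (nat \<Rightarrow> bool) set" where
  "cylinder bs = {\<omega>. \<forall>i<length bs. \<omega> i = bs ! i}"

definition prefix_prob :: "(nat \<Rightarrow> real) \<Rightarrow> bool list \<Rightarrow> real" where
  "prefix_prob p bs = (\<Prod>i<length bs. if bs ! i then p i else 1 - p i)"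

definition extend_prefix :: "bool list \<Rightarrow> nat \<Rightarrow> bool" where
  "extend_prefix bs i = (i < length bs \<and> bs ! i)"

definition depends_on_prefix :: "nat \<Rightarrow> ((nat \<Rightarrow> bool) \<Rightarrow> 'a) \<Rightarrow> bool" where
  "depends_on_prefix n g \<longleftrightarrow> (\<forall>\<omega> \<omega>'. (\<forall>i<n. \<omega> i = \<omega>' i) \<longrightarrow> g \<omega> = g \<omega>')"

lemma depends_on_prefix_comp: "depends_on_prefix n g \<Longrightarrow> depends_on_prefix n (\<lambda>\<omega>. h (g \<omega>))"
  unfolding depends_on_prefix_def by metis

lemma prob_space_cookie_space: "prob_space (cookie_space p)"
proof -
  interpret product_prob_space "\<lambda>i. measure_pmf (bernoulli_pmf (p i))" UNIV
    by (intro product_prob_spaceI prob_space_measure_pmf)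
  show ?thesis
    unfolding cookie_space_def by unfold_locales
qed

lemma space_cookie_space [simp]: "space (cookie_space p) = UNIV"
  unfolding cookie_space_def by (auto simp: space_PiM)

lemma cylinder_eq_prod_set:
  "cylinder bs = {\<omega> \<in> space (cookie_space p). \<forall>i\<in>{..<length bs}. \<omega> i \<in> {bs ! i}}"
  by (auto simp: cylinder_def)

lemma sets_cylinder [measurable]: "cylinder bs \<in> sets (cookie_space p)"
  unfolding cylinder_eq_prod_set[of _ p] unfolding cookie_space_def
  by (rule sets.sets_Collect_finite_All) (auto intro: sets_Collect_single)

lemma finite_lists_of_length [simp]: "finite {bs :: bool list. length bs = n}"
  using finite_lists_length_eq[of "UNIV :: bool set" n] by simp

lemma mem_cylinder_iff: "length bs = n \<Longrightarrow> \<omega> \<in> cylinder bs \<longleftrightarrow> bs = map \<omega> [0..<n]"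
  by (auto simp: cylinder_def list_eq_iff_nth_eq)

lemma lists_of_length_Suc:
  "{bs :: bool list. length bs = Suc n} = (\<lambda>(bs, b). bs @ [b]) ` ({bs. length bs = n} \<times> UNIV)"
proof (intro set_eqI iffI)
  fix xs :: "bool list" assume "xs \<in> {bs. length bs = Suc n}"
  then obtain ys y where "xs = ys @ [y]" "length ys = n"
    by (auto simp: length_Suc_conv_rev)
  then show "xs \<in> (\<lambda>(bs, b). bs @ [b]) ` ({bs. length bs = n} \<times> UNIV)"
    by force
qed auto

lemma depends_on_prefix_extend_prefix:
  "depends_on_prefix n g \<Longrightarrow> g (extend_prefix (map \<omega> [0..<n])) = g \<omega>"
  unfolding depends_on_prefix_def by (simp add: extend_prefix_def)

lemma depends_on_prefix_eq_sum_indicator: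
  fixes g :: "(nat \<Rightarrow> bool) \<Rightarrow> real"
  assumes "depends_on_prefix n g"
  shows "g = (\<lambda>\<omega>. \<Sum>bs | length bs = n. g (extend_prefix bs) * indicator (cylinder bs) \<omega>)"
proof
  fix \<omega>
  have "(\<Sum>bs | length bs = n. g (extend_prefix bs) * indicator (cylinder bs) \<omega>)
      = (\<Sum>bs | length bs = n. if bs = map \<omega> [0..<n] then g (extend_prefix bs) else 0)"
    by (intro sum.cong refl) (simp add: indicator_def mem_cylinder_iff)
  also have "\<dots> = g \<omega>"
    by (simp add: depends_on_prefix_extend_prefix[OF assms])
  finally show "g \<omega> = (\<Sum>bs | length bs = n. g (extend_prefix bs) * indicator (cylinder bs) \<omega>)" ..
qed

lemma measurable_depends_on_prefix:
  assumes "depends_on_prefix n g"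
  shows "g \<in> cookie_space p \<rightarrow>\<^sub>M count_space UNIV"
proof (rule measurableI)
  fix A
  let ?B = "{bs. length bs = n \<and> g (extend_prefix bs) \<in> A}"
  have "g -` A \<inter> space (cookie_space p) = (\<Union>bs \<in> ?B. cylinder bs)"
  proof (intro set_eqI iffI)
    fix \<omega> assume "\<omega> \<in> g -` A \<inter> space (cookie_space p)"
    then show "\<omega> \<in> (\<Union>bs \<in> ?B. cylinder bs)"
      using depends_on_prefix_extend_prefix[OF assms, of \<omega>]
      by (intro UN_I[of "map \<omega> [0..<n]"]) (auto simp: cylinder_def)
  next
    fix \<omega> assume "\<omega> \<in> (\<Union>bs \<in> ?B. cylinder bs)"
    then obtain bs where "length bs = n" "g (extend_prefix bs) \<in> A" "\<omega> \<in> cylinder bs"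
      by blast
    then show "\<omega> \<in> g -` A \<inter> space (cookie_space p)"
      using depends_on_prefix_extend_prefix[OF assms, of \<omega>] mem_cylinder_iff by auto
  qed
  moreover have "finite ?B"
    by (rule finite_subset[OF _ finite_lists_of_length[of n]]) auto
  ultimately show "g -` A \<inter> space (cookie_space p) \<in> sets (cookie_space p)"
    by (simp add: sets.finite_UN)
qed simp

lemma integrable_depends_on_prefix:
  fixes g :: "(nat \<Rightarrow> bool) \<Rightarrow> real"
  assumes "depends_on_prefix n g"
  shows "integrable (cookie_space p) g"
proof -
  interpret prob_space "cookie_space p" by (rule prob_space_cookie_space)
  show ?thesis
    by (subst depends_on_prefix_eq_sum_indicator[OF assms])
       (intro Bochner_Integration.integrable_sum integrable_mult_right integrable_real_indicator
         sets_cylinder, simp add: less_top[symmetric])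
qed

section \<open>The walk stopped at the \<open>x\<close>-th failure\<close>

fun stopped_walk :: "nat \<Rightarrow> nat \<Rightarrow> (nat \<Rightarrow> bool) \<Rightarrow> nat \<times> nat" where
  "stopped_walk x 0 \<omega> = (0, 0)"
| "stopped_walk x (Suc n) \<omega> = (case stopped_walk x n \<omega> of (s, f) \<Rightarrow>
     if f = x then (s, f) else if \<omega> n then (Suc s, f) else (s, Suc f))"

definition failures_before :: "nat \<Rightarrow> (nat \<Rightarrow> bool) \<Rightarrow> nat" where
  "failures_before k \<omega> = card {i. i < k \<and> \<not> \<omega> i}"

lemma failures_before_Suc:
  "failures_before (Suc k) \<omega> = failures_before k \<omega> + (if \<omega> k then 0 else 1)"
proof -
  have "{i. i < Suc k \<and> \<not> \<omega> i}
      = (if \<omega> k then {i. i < k \<and> \<not> \<omega> i} else insert k {i. i < k \<and> \<not> \<omega> i})"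
    by (auto simp: less_Suc_eq)
  then show ?thesis
    by (simp add: failures_before_def)
qed

lemma failures_before_mono: "k \<le> m \<Longrightarrow> failures_before k \<omega> \<le> failures_before m \<omega>"
  unfolding failures_before_def by (intro card_mono) auto

lemma stopped_walk_invariant:
  assumes "stopped_walk x n \<omega> = (s, f)"
  shows "f \<le> x \<and> (f < x \<longrightarrow> s + f = n) \<and> failures_before (s + f) \<omega> = f
    \<and> (\<forall>k < s + f. failures_before k \<omega> < x)"
  using assms
proof (induction n arbitrary: s f)
  case (Suc n)
  obtain s' f' where prev: "stopped_walk x n \<omega> = (s', f')"
    by fastforce
  show ?case
  proof (cases "f' = x")
    case False
    with Suc.IH[OF prev] have "f' < x" "s' + f' = n" "failures_before n \<omega> = f'"
      "\<forall>k<n. failures_before k \<omega> < x"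
      by auto
    moreover have "failures_before k \<omega> < x" if "k \<le> n" for k
      using failures_before_mono[OF that, of \<omega>] \<open>f' < x\<close> \<open>failures_before n \<omega> = f'\<close> by simp
    ultimately show ?thesis
      using Suc.prems prev False by (auto simp: failures_before_Suc less_Suc_eq_le split: if_splits)
  qed (use Suc prev in auto)
qed (simp add: failures_before_def)

lemma stopped_walk_failures_le: "snd (stopped_walk x n \<omega>) \<le> x"
  using stopped_walk_invariant[of x n \<omega>] by (cases "stopped_walk x n \<omega>") auto

lemma stopped_walk_running:
  "snd (stopped_walk x n \<omega>) < x \<Longrightarrow> fst (stopped_walk x n \<omega>) + snd (stopped_walk x n \<omega>) = n"
  using stopped_walk_invariant[of x n \<omega>] by (cases "stopped_walk x n \<omega>") auto

lemma U_cookie_stopped_walk: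
  assumes "snd (stopped_walk x n \<omega>) = x"
  shows "U_cookie x \<omega> = fst (stopped_walk x n \<omega>)"
proof -
  obtain s where walk: "stopped_walk x n \<omega> = (s, x)"
    using assms by (cases "stopped_walk x n \<omega>") auto
  have "(LEAST k. card {i. i < k \<and> \<not> \<omega> i} = x) = s + x"
    using stopped_walk_invariant[OF walk] unfolding failures_before_def
    by (intro Least_equality) (auto simp: not_le[symmetric])
  then show ?thesis
    by (simp add: U_cookie_def walk)
qed

lemma stopped_walk_stopped:
  assumes "snd (stopped_walk x n \<omega>) = x" and "n \<le> m"
  shows "stopped_walk x m \<omega> = stopped_walk x n \<omega>"
  using assms(2) by (induction m rule: dec_induct) (use assms(1) in \<open>auto split: prod.splits\<close>)

lemma incseq_stopped_walk_successes: "incseq (\<lambda>n. fst (stopped_walk x n \<omega>))"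
  by (rule incseq_SucI) (auto split: prod.splits)

lemma eventually_stopped_walk_eq:
  assumes "snd (stopped_walk x N \<omega>) = x"
  shows "\<forall>\<^sub>F n in sequentially. stopped_walk x n \<omega> = (U_cookie x \<omega>, x)"
  unfolding eventually_sequentially
  using assms stopped_walk_stopped[OF assms] U_cookie_stopped_walk[OF assms]
  by (metis prod.collapse)

lemma stopped_walk_successes_le:
  assumes "\<forall>\<^sub>F m in sequentially. stopped_walk x m \<omega> = (u, x)"
  shows "fst (stopped_walk x n \<omega>) \<le> u"
proof -
  obtain N where "\<forall>m\<ge>N. stopped_walk x m \<omega> = (u, x)"
    using assms unfolding eventually_sequentially by blast
  then have "stopped_walk x (max n N) \<omega> = (u, x)"
    by simp
  then show ?thesis
    using incseq_stopped_walk_successes[of x \<omega>] by (metis fst_conv incseqD max.cobounded1)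
qed

lemma depends_on_prefix_stopped_walk: "depends_on_prefix n (stopped_walk x n)"
  unfolding depends_on_prefix_def
proof (intro allI impI)
  fix \<omega> \<omega>' :: "nat \<Rightarrow> bool"
  show "\<forall>i<n. \<omega> i = \<omega>' i \<Longrightarrow> stopped_walk x n \<omega> = stopped_walk x n \<omega>'"
    by (induction n) (auto split: prod.splits)
qed

lemma measurable_stopped_walk [measurable]:
  "stopped_walk x n \<in> cookie_space p \<rightarrow>\<^sub>M count_space UNIV"
  by (rule measurable_depends_on_prefix[OF depends_on_prefix_stopped_walk])

lemma measurable_U_cookie [measurable]: "U_cookie x \<in> cookie_space p \<rightarrow>\<^sub>M count_space UNIV"
proof -
  have "(\<lambda>\<omega>. card {i. i < k \<and> \<not> \<omega> i} = x) \<in> cookie_space p \<rightarrow>\<^sub>M count_space UNIV" for k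
    by (rule measurable_depends_on_prefix[of k]) (auto simp: depends_on_prefix_def intro!: arg_cong[where f = card])
  then show ?thesis
    unfolding U_cookie_def by measurable
qed

lemma sets_never_stopped: "{\<omega>. \<forall>n. snd (stopped_walk x n \<omega>) < x} \<in> sets (cookie_space p)"
proof -
  have "{\<omega> \<in> space (cookie_space p). \<forall>n. snd (stopped_walk x n \<omega>) < x} \<in> sets (cookie_space p)"
    by measurable
  then show ?thesis
    by simp
qed

lemma integrable_stopped_walk:
  fixes F :: "nat \<times> nat \<Rightarrow> real"
  shows "integrable (cookie_space p) (\<lambda>\<omega>. F (stopped_walk x n \<omega>))"
  by (rule integrable_depends_on_prefix[OF depends_on_prefix_comp[OF depends_on_prefix_stopped_walk]])

definition drift :: "(nat \<Rightarrow> real) \<Rightarrow> nat \<Rightarrow> real" where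
  "drift p i = 2 * p i - 1"

definition cumulative_drift :: "(nat \<Rightarrow> real) \<Rightarrow> nat \<Rightarrow> real" where
  "cumulative_drift p t = (\<Sum>i<t. drift p i)"

definition cumulative_sq_drift :: "(nat \<Rightarrow> real) \<Rightarrow> nat \<Rightarrow> real" where
  "cumulative_sq_drift p t = (\<Sum>i<t. (drift p i)\<^sup>2)"

text \<open>The position \<open>s - f\<close> minus its compensator; a martingale, since the step at time \<open>t\<close>
  has mean \<open>2 p t - 1\<close>.\<close>
definition compensated_position :: "(nat \<Rightarrow> real) \<Rightarrow> nat \<Rightarrow> nat \<Rightarrow> real" where
  "compensated_position p s f = real s - real f - cumulative_drift p (s + f)"

lemma abs_quadratic_remainder_le:
  fixes m d r \<delta> c :: real
  assumes "0 \<le> r" "r \<le> d" "d \<le> \<delta>" "0 < c"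
  shows "\<bar>d - r + 2 * m * d + d\<^sup>2\<bar> \<le> \<delta> + \<delta>\<^sup>2 + \<delta>\<^sup>2 * c + m\<^sup>2 / c"
proof -
  have "2 * \<bar>m\<bar> * d * c \<le> m\<^sup>2 + d\<^sup>2 * c\<^sup>2"
    using sum_squares_ge_zero[of "\<bar>m\<bar> - d * c" 0] by (simp add: power2_eq_square algebra_simps)
  then have "\<bar>2 * m * d\<bar> \<le> m\<^sup>2 / c + d\<^sup>2 * c"
    using assms by (simp add: abs_mult field_simps power2_eq_square)
  moreover have "d\<^sup>2 \<le> \<delta>\<^sup>2"
    using assms by (simp add: power_mono)
  moreover have "d\<^sup>2 * c \<le> \<delta>\<^sup>2 * c"
    using \<open>d\<^sup>2 \<le> \<delta>\<^sup>2\<close> assms(4) by simp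
  ultimately show ?thesis
    using assms zero_le_power2[of d] unfolding abs_le_iff by linarith
qed

lemma abs_position_sq_le:
  assumes "s \<le> u" and "f \<le> x"
  shows "\<bar>(real s - real f)\<^sup>2 - 2 * real f\<bar> \<le> (real u)\<^sup>2 + (real x)\<^sup>2 + 2 * real x"
proof -
  have "(real s)\<^sup>2 \<le> (real u)\<^sup>2" "(real f)\<^sup>2 \<le> (real x)\<^sup>2"
    using assms by (simp_all add: power_mono)
  moreover have "(real s - real f)\<^sup>2 = (real s)\<^sup>2 + (real f)\<^sup>2 - 2 * (real s * real f)"
    by (simp add: power2_diff)
  ultimately show ?thesis
    using assms(2) zero_le_power2[of "real s - real f"] zero_le_power2[of "real u"]
      zero_le_power2[of "real x"] mult_nonneg_nonneg[of "real s" "real f"]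
    unfolding abs_le_iff by linarith
qed

lemma remainder_bound_le:
  fixes \<delta> c :: real
  assumes "1 \<le> c" and "0 \<le> \<delta>"
  shows "\<delta> + \<delta>\<^sup>2 + \<delta>\<^sup>2 * c + (\<delta> + 2 * c\<^sup>2) / c \<le> (2 + 2 * \<delta> + 2 * \<delta>\<^sup>2) * c"
proof -
  have "\<delta> \<le> \<delta> * c"
    using assms by (simp add: mult_le_cancel_left1)
  moreover have "\<delta> / c \<le> \<delta>"
    using assms \<open>\<delta> \<le> \<delta> * c\<close> by (simp add: divide_le_eq)
  moreover have "\<delta> + \<delta>\<^sup>2 \<le> (\<delta> + \<delta>\<^sup>2) * c"
    using mult_left_mono[OF assms(1), of "\<delta> + \<delta>\<^sup>2"] assms(2) by simp
  ultimately show ?thesis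
    using assms by (simp add: add_divide_distrib power2_eq_square algebra_simps)
qed

section \<open>Martingales of the stopped walk\<close>

locale cookie_environment =
  fixes p :: "nat \<Rightarrow> real"
  assumes p_nonneg: "0 \<le> p i" and p_le_1: "p i \<le> 1"
begin

sublocale prob_space "cookie_space p"
  by (rule prob_space_cookie_space)

lemma prob_UNIV [simp]: "prob UNIV = 1"
  using prob_space by simp

lemma measure_cylinder: "measure (cookie_space p) (cylinder bs) = prefix_prob p bs"
proof -
  interpret product_prob_space "\<lambda>i. measure_pmf (bernoulli_pmf (p i))" UNIV
    by (intro product_prob_spaceI prob_space_measure_pmf)
  have "emeasure (cookie_space p) (cylinder bs)
      = (\<Prod>i<length bs. emeasure (measure_pmf (bernoulli_pmf (p i))) {bs ! i})"
    unfolding cylinder_eq_prod_set[of _ p] unfolding cookie_space_def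
    by (rule emeasure_PiM_Collect) auto
  also have "\<dots> = (\<Prod>i<length bs. ennreal (if bs ! i then p i else 1 - p i))"
    using p_nonneg p_le_1 by (intro prod.cong refl) (auto simp: emeasure_pmf_single)
  also have "\<dots> = ennreal (prefix_prob p bs)"
    unfolding prefix_prob_def using p_nonneg p_le_1 by (subst prod_ennreal) auto
  finally show ?thesis
    using p_nonneg p_le_1
    by (simp add: measure_def prefix_prob_def prod_nonneg)
qed

lemma integral_depends_on_prefix:
  fixes g :: "(nat \<Rightarrow> bool) \<Rightarrow> real"
  assumes "depends_on_prefix n g"
  shows "expectation g = (\<Sum>bs | length bs = n. prefix_prob p bs * g (extend_prefix bs))"
proof -
  have "expectation g = (\<Sum>bs | length bs = n. expectation (\<lambda>\<omega>. g (extend_prefix bs) * indicator (cylinder bs) \<omega>))"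
    by (subst depends_on_prefix_eq_sum_indicator[OF assms], rule Bochner_Integration.integral_sum)
       (intro integrable_mult_right integrable_real_indicator sets_cylinder, simp add: less_top[symmetric])
  then show ?thesis
    by (simp add: measure_cylinder mult.commute)
qed

lemma integral_bernoulli_step:
  fixes G :: "(nat \<Rightarrow> bool) \<Rightarrow> bool \<Rightarrow> real"
  assumes dep: "\<And>b. depends_on_prefix n (\<lambda>\<omega>. G \<omega> b)"
  shows "expectation (\<lambda>\<omega>. G \<omega> (\<omega> n)) = expectation (\<lambda>\<omega>. p n * G \<omega> True + (1 - p n) * G \<omega> False)"
proof -
  have dep_step: "depends_on_prefix (Suc n) (\<lambda>\<omega>. G \<omega> (\<omega> n))"
    unfolding depends_on_prefix_def
  proof (intro allI impI)
    fix \<omega> \<omega>' :: "nat \<Rightarrow> bool" assume "\<forall>i<Suc n. \<omega> i = \<omega>' i"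
    then show "G \<omega> (\<omega> n) = G \<omega>' (\<omega>' n)"
      using dep[of "\<omega> n"] by (simp add: depends_on_prefix_def)
  qed
  have dep_avg: "depends_on_prefix n (\<lambda>\<omega>. p n * G \<omega> True + (1 - p n) * G \<omega> False)"
    using dep unfolding depends_on_prefix_def by metis
  have G_snoc: "G (extend_prefix (bs @ [b])) c = G (extend_prefix bs) c" if "length bs = n" for bs b c
    using dep[of c] that unfolding depends_on_prefix_def by (simp add: extend_prefix_def nth_append)
  have "expectation (\<lambda>\<omega>. G \<omega> (\<omega> n))
      = (\<Sum>(bs, b) \<in> {bs. length bs = n} \<times> UNIV.
           prefix_prob p (bs @ [b]) * G (extend_prefix (bs @ [b])) (extend_prefix (bs @ [b]) n))"
    unfolding integral_depends_on_prefix[OF dep_step] lists_of_length_Suc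
    by (subst sum.reindex) (auto simp: inj_on_def case_prod_beta)
  also have "\<dots> = (\<Sum>bs | length bs = n. prefix_prob p bs * (p n * G (extend_prefix bs) True
                                             + (1 - p n) * G (extend_prefix bs) False))"
    unfolding sum.cartesian_product[symmetric]
  proof (intro sum.cong refl)
    fix bs :: "bool list" assume "bs \<in> {bs. length bs = n}"
    then have "length bs = n" by simp
    moreover have "prefix_prob p (bs @ [b]) = prefix_prob p bs * (if b then p (length bs) else 1 - p (length bs))" for b
      by (simp add: prefix_prob_def nth_append)
    ultimately show "(\<Sum>b\<in>UNIV. prefix_prob p (bs @ [b]) * G (extend_prefix (bs @ [b])) (extend_prefix (bs @ [b]) n))
        = prefix_prob p bs * (p n * G (extend_prefix bs) True + (1 - p n) * G (extend_prefix bs) False)"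
      by (simp add: UNIV_bool G_snoc extend_prefix_def nth_append algebra_simps)
  qed
  also have "\<dots> = expectation (\<lambda>\<omega>. p n * G \<omega> True + (1 - p n) * G \<omega> False)"
    by (rule integral_depends_on_prefix[OF dep_avg, symmetric])
  finally show ?thesis .
qed

lemma integral_stopped_walk_harmonic:
  fixes \<phi> :: "nat \<Rightarrow> nat \<Rightarrow> real"
  assumes harmonic: "\<And>s f. f < x \<Longrightarrow> p (s + f) * \<phi> (Suc s) f + (1 - p (s + f)) * \<phi> s (Suc f) = \<phi> s f"
  shows "expectation (\<lambda>\<omega>. case_prod \<phi> (stopped_walk x n \<omega>)) = \<phi> 0 0"
proof (induction n)
  case (Suc n)
  define G where "G \<omega> b = (case stopped_walk x n \<omega> of (s, f) \<Rightarrow>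
      if f = x then \<phi> s f else if b then \<phi> (Suc s) f else \<phi> s (Suc f))" for \<omega> b
  have dep: "depends_on_prefix n (\<lambda>\<omega>. G \<omega> b)" for b
    unfolding G_def by (rule depends_on_prefix_comp[OF depends_on_prefix_stopped_walk])
  have "expectation (\<lambda>\<omega>. case_prod \<phi> (stopped_walk x (Suc n) \<omega>)) = expectation (\<lambda>\<omega>. G \<omega> (\<omega> n))"
    by (intro Bochner_Integration.integral_cong refl) (simp add: G_def split: prod.splits)
  also have "\<dots> = expectation (\<lambda>\<omega>. p n * G \<omega> True + (1 - p n) * G \<omega> False)"
    by (rule integral_bernoulli_step[OF dep])
  also have "\<dots> = expectation (\<lambda>\<omega>. case_prod \<phi> (stopped_walk x n \<omega>))"
  proof (intro Bochner_Integration.integral_cong refl)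
    fix \<omega>
    obtain s f where walk: "stopped_walk x n \<omega> = (s, f)"
      by fastforce
    show "p n * G \<omega> True + (1 - p n) * G \<omega> False = case_prod \<phi> (stopped_walk x n \<omega>)"
      using stopped_walk_invariant[OF walk] harmonic[of f s]
      by (cases "f = x") (auto simp: G_def walk algebra_simps)
  qed
  finally show ?case
    using Suc.IH by simp
qed simp

lemma expectation_compensated_position:
  "expectation (\<lambda>\<omega>. case_prod (compensated_position p) (stopped_walk x n \<omega>)) = 0"
  by (subst integral_stopped_walk_harmonic)
     (simp_all add: compensated_position_def cumulative_drift_def drift_def algebra_simps)

lemma expectation_compensated_position_sq:
  "expectation (\<lambda>\<omega>. case stopped_walk x n \<omega> of (s, f) \<Rightarrow>
      (compensated_position p s f)\<^sup>2 - (real (s + f) - cumulative_sq_drift p (s + f))) = 0"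
proof (subst integral_stopped_walk_harmonic)
  fix s f :: nat
  define m where "m = compensated_position p s f"
  define e where "e = drift p (s + f)"
  have steps: "compensated_position p (Suc s) f = m + 1 - e" "compensated_position p s (Suc f) = m - 1 - e"
    "cumulative_sq_drift p (Suc s + f) = cumulative_sq_drift p (s + f) + e\<^sup>2"
    "cumulative_sq_drift p (s + Suc f) = cumulative_sq_drift p (s + f) + e\<^sup>2"
    "p (s + f) = (1 + e) / 2"
    by (simp_all add: m_def e_def compensated_position_def cumulative_drift_def
        cumulative_sq_drift_def drift_def)
  show "p (s + f) * ((compensated_position p (Suc s) f)\<^sup>2
        - (real (Suc s + f) - cumulative_sq_drift p (Suc s + f)))
      + (1 - p (s + f)) * ((compensated_position p s (Suc f))\<^sup>2
        - (real (s + Suc f) - cumulative_sq_drift p (s + Suc f)))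
      = (compensated_position p s f)\<^sup>2 - (real (s + f) - cumulative_sq_drift p (s + f))"
    unfolding steps m_def[symmetric] by (simp add: power2_eq_square field_simps)
qed (simp add: compensated_position_def cumulative_drift_def cumulative_sq_drift_def)

end

section \<open>Second moments when the total drift is finite\<close>

locale finite_drift_environment = cookie_environment +
  assumes p_ge_half: "1/2 \<le> p i" and summable_drift: "summable (drift p)"
begin

abbreviation total_drift :: real where
  "total_drift \<equiv> suminf (drift p)"

abbreviation error_constant :: real where
  "error_constant \<equiv> 2 + 2 * total_drift + 2 * total_drift\<^sup>2"

lemma drift_nonneg: "0 \<le> drift p i"
  using p_ge_half[of i] by (simp add: drift_def)

lemma total_drift_nonneg: "0 \<le> total_drift"
  by (rule suminf_nonneg[OF summable_drift drift_nonneg])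

lemma cumulative_drift_bounds:
  shows cumulative_sq_drift_nonneg: "0 \<le> cumulative_sq_drift p t"
    and cumulative_sq_drift_le: "cumulative_sq_drift p t \<le> cumulative_drift p t"
    and cumulative_drift_le: "cumulative_drift p t \<le> total_drift"
proof -
  show "0 \<le> cumulative_sq_drift p t"
    by (simp add: cumulative_sq_drift_def sum_nonneg)
  have "drift p i \<le> 1" for i
    using p_le_1[of i] by (simp add: drift_def)
  then show "cumulative_sq_drift p t \<le> cumulative_drift p t"
    unfolding cumulative_sq_drift_def cumulative_drift_def
    by (intro sum_mono) (simp add: power2_eq_square mult_left_le drift_nonneg)
  show "cumulative_drift p t \<le> total_drift"
    unfolding cumulative_drift_def by (rule sum_le_suminf[OF summable_drift]) (auto intro: drift_nonneg)
qed

lemma expectation_steps_le: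
  "expectation (\<lambda>\<omega>. real (fst (stopped_walk x n \<omega>) + snd (stopped_walk x n \<omega>)))
     \<le> total_drift + 2 * real x"
proof -
  have "expectation (\<lambda>\<omega>. real (fst (stopped_walk x n \<omega>) + snd (stopped_walk x n \<omega>)))
      = expectation (\<lambda>\<omega>. case_prod (compensated_position p) (stopped_walk x n \<omega>))
        + expectation (\<lambda>\<omega>. cumulative_drift p (fst (stopped_walk x n \<omega>) + snd (stopped_walk x n \<omega>))
                            + 2 * real (snd (stopped_walk x n \<omega>)))"
    by (subst Bochner_Integration.integral_add[symmetric])
       (auto intro!: integrable_stopped_walk Bochner_Integration.integral_cong
         simp: compensated_position_def split: prod.splits)
  also have "\<dots> \<le> total_drift + 2 * real x"
    unfolding expectation_compensated_position
    using cumulative_drift_le stopped_walk_failures_le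
    by (auto intro!: integral_le_const integrable_stopped_walk add_mono)
  finally show ?thesis .
qed

lemma expectation_compensated_position_sq_le:
  "expectation (\<lambda>\<omega>. (case_prod (compensated_position p) (stopped_walk x n \<omega>))\<^sup>2)
     \<le> total_drift + 2 * real x"
proof -
  have "expectation (\<lambda>\<omega>. (case_prod (compensated_position p) (stopped_walk x n \<omega>))\<^sup>2)
      \<le> expectation (\<lambda>\<omega>. (case stopped_walk x n \<omega> of (s, f) \<Rightarrow>
            (compensated_position p s f)\<^sup>2 - (real (s + f) - cumulative_sq_drift p (s + f)))
          + real (fst (stopped_walk x n \<omega>) + snd (stopped_walk x n \<omega>)))"
    using cumulative_sq_drift_nonneg
    by (intro integral_mono integrable_stopped_walk) (auto split: prod.splits)
  also have "\<dots> = expectation (\<lambda>\<omega>. real (fst (stopped_walk x n \<omega>) + snd (stopped_walk x n \<omega>)))"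
    using expectation_compensated_position_sq[of x n]
    by (subst Bochner_Integration.integral_add) (auto intro!: integrable_stopped_walk)
  also have "\<dots> \<le> total_drift + 2 * real x"
    by (rule expectation_steps_le)
  finally show ?thesis .
qed

lemma expectation_successes_sq_le:
  "expectation (\<lambda>\<omega>. (real (fst (stopped_walk x n \<omega>)))\<^sup>2)
     \<le> 2 * (total_drift + 2 * real x) + 2 * (total_drift + real x)\<^sup>2"
proof -
  have pointwise: "(real s)\<^sup>2 \<le> 2 * (compensated_position p s f)\<^sup>2 + 2 * (total_drift + real x)\<^sup>2"
    if "f \<le> x" for s f
  proof -
    have "0 \<le> cumulative_drift p (s + f) + real f"
      using cumulative_sq_drift_nonneg cumulative_sq_drift_le by (smt (verit) of_nat_0_le_iff)
    moreover have "cumulative_drift p (s + f) + real f \<le> total_drift + real x"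
      using cumulative_drift_le that by (simp add: add_mono)
    ultimately have "(cumulative_drift p (s + f) + real f)\<^sup>2 \<le> (total_drift + real x)\<^sup>2"
      by (simp add: power_mono)
    moreover have "real s = compensated_position p s f + (cumulative_drift p (s + f) + real f)"
      by (simp add: compensated_position_def)
    ultimately show ?thesis
      using sum_squares_ge_zero[of "compensated_position p s f - (cumulative_drift p (s + f) + real f)" 0]
      by (simp add: power2_eq_square algebra_simps)
  qed
  have "expectation (\<lambda>\<omega>. (real (fst (stopped_walk x n \<omega>)))\<^sup>2)
      \<le> expectation (\<lambda>\<omega>. 2 * (case_prod (compensated_position p) (stopped_walk x n \<omega>))\<^sup>2
                          + 2 * (total_drift + real x)\<^sup>2)"
    using pointwise[OF stopped_walk_failures_le]
    by (intro integral_mono integrable_stopped_walk) (simp add: case_prod_beta)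
  also have "\<dots> \<le> 2 * (total_drift + 2 * real x) + 2 * (total_drift + real x)\<^sup>2"
    using expectation_compensated_position_sq_le[of x n]
    by (subst Bochner_Integration.integral_add) (auto intro!: integrable_stopped_walk)
  finally show ?thesis .
qed

lemma expectation_position_sq_bound:
  assumes "1 \<le> x"
  shows "\<bar>expectation (\<lambda>\<omega>. case stopped_walk x n \<omega> of (s, f) \<Rightarrow> (real s - real f)\<^sup>2 - 2 * real f)\<bar>
    \<le> error_constant * sqrt (real x)"
proof -
  define c where "c = sqrt (real x)"
  have c: "1 \<le> c" "real x = c\<^sup>2"
    using assms by (simp_all add: c_def)
  define Q where "Q s f = (compensated_position p s f)\<^sup>2 - (real (s + f) - cumulative_sq_drift p (s + f))"
    for s f
  define W where "W s f = cumulative_drift p (s + f) - cumulative_sq_drift p (s + f)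
      + 2 * compensated_position p s f * cumulative_drift p (s + f) + (cumulative_drift p (s + f))\<^sup>2"
    for s f
  have "expectation (\<lambda>\<omega>. case stopped_walk x n \<omega> of (s, f) \<Rightarrow> (real s - real f)\<^sup>2 - 2 * real f)
      = expectation (\<lambda>\<omega>. case_prod Q (stopped_walk x n \<omega>)
          + case_prod (compensated_position p) (stopped_walk x n \<omega>) + case_prod W (stopped_walk x n \<omega>))"
    by (intro Bochner_Integration.integral_cong refl)
       (auto simp: Q_def W_def compensated_position_def power2_eq_square algebra_simps split: prod.splits)
  also have "\<dots> = expectation (\<lambda>\<omega>. case_prod W (stopped_walk x n \<omega>))"
    using expectation_compensated_position[of x n] expectation_compensated_position_sq[of x n]
    by (simp add: Bochner_Integration.integral_add integrable_stopped_walk Q_def[abs_def])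
  finally have "\<bar>expectation (\<lambda>\<omega>. case stopped_walk x n \<omega> of (s, f) \<Rightarrow> (real s - real f)\<^sup>2 - 2 * real f)\<bar>
      = \<bar>expectation (\<lambda>\<omega>. case_prod W (stopped_walk x n \<omega>))\<bar>" by simp
  also have "\<dots> \<le> expectation (\<lambda>\<omega>. \<bar>case_prod W (stopped_walk x n \<omega>)\<bar>)"
    using integral_norm_bound[of "cookie_space p" "\<lambda>\<omega>. case_prod W (stopped_walk x n \<omega>)"] by simp
  also have "\<dots> \<le> expectation (\<lambda>\<omega>. total_drift + total_drift\<^sup>2 + total_drift\<^sup>2 * c
      + (case_prod (compensated_position p) (stopped_walk x n \<omega>))\<^sup>2 / c)"
    unfolding W_def using c
    by (intro integral_mono integrable_stopped_walk)
       (auto intro!: abs_quadratic_remainder_le cumulative_drift_bounds split: prod.splits)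
  also have "\<dots> = total_drift + total_drift\<^sup>2 + total_drift\<^sup>2 * c
      + expectation (\<lambda>\<omega>. (case_prod (compensated_position p) (stopped_walk x n \<omega>))\<^sup>2) / c"
    by (subst Bochner_Integration.integral_add) (auto intro!: integrable_stopped_walk)
  also have "\<dots> \<le> total_drift + total_drift\<^sup>2 + total_drift\<^sup>2 * c + (total_drift + 2 * c\<^sup>2) / c"
    using expectation_compensated_position_sq_le[of x n] c by (simp add: divide_right_mono)
  also have "\<dots> \<le> error_constant * c"
    using c(1) total_drift_nonneg by (rule remainder_bound_le)
  finally show ?thesis
    by (simp add: c_def)
qed

lemma prob_never_stopped: "prob {\<omega>. \<forall>n. snd (stopped_walk x n \<omega>) < x} = 0"
proof -
  define B where "B = {\<omega>. \<forall>n. snd (stopped_walk x n \<omega>) < x}"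
  have B: "B \<in> sets (cookie_space p)"
    unfolding B_def by (rule sets_never_stopped)
  have bound: "real n * prob B \<le> total_drift + 2 * real x" for n
  proof -
    have "real n * prob B = expectation (\<lambda>\<omega>. real n * indicator B \<omega>)"
      using B by simp
    also have "\<dots> \<le> expectation (\<lambda>\<omega>. real (fst (stopped_walk x n \<omega>) + snd (stopped_walk x n \<omega>)))"
    proof (intro integral_mono integrable_stopped_walk integrable_mult_right integrable_real_indicator)
      fix \<omega>
      show "real n * indicator B \<omega> \<le> real (fst (stopped_walk x n \<omega>) + snd (stopped_walk x n \<omega>))"
        using stopped_walk_running[of x n \<omega>] by (auto simp: B_def indicator_def simp flip: of_nat_add)
    qed (use B in \<open>simp_all add: less_top[symmetric]\<close>)
    also have "\<dots> \<le> total_drift + 2 * real x"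
      by (rule expectation_steps_le)
    finally show ?thesis .
  qed
  show ?thesis
    unfolding B_def[symmetric]
  proof (rule ccontr)
    assume "prob B \<noteq> 0"
    then have "0 < prob B"
      using measure_nonneg[of "cookie_space p" B] by linarith
    moreover obtain n :: nat where "(total_drift + 2 * real x) / prob B < real n"
      using reals_Archimedean2 by blast
    ultimately show False
      using bound[of n] by (simp add: field_simps)
  qed
qed

lemma AE_eventually_stopped_walk_eq:
  "AE \<omega> in cookie_space p. \<forall>\<^sub>F n in sequentially. stopped_walk x n \<omega> = (U_cookie x \<omega>, x)"
proof -
  define B where "B = {\<omega>. \<forall>n. snd (stopped_walk x n \<omega>) < x}"
  have "B \<in> null_sets (cookie_space p)"
    using prob_never_stopped[of x] sets_never_stopped[of x p] unfolding B_def
    by (simp add: null_sets_def emeasure_eq_measure)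
  then have "AE \<omega> in cookie_space p. \<omega> \<notin> B"
    by (rule AE_not_in)
  then show ?thesis
  proof eventually_elim
    fix \<omega> assume "\<omega> \<notin> B"
    then obtain N where "\<not> snd (stopped_walk x N \<omega>) < x"
      by (auto simp: B_def)
    then have "snd (stopped_walk x N \<omega>) = x"
      using stopped_walk_failures_le[of x N \<omega>] by linarith
    then show "\<forall>\<^sub>F n in sequentially. stopped_walk x n \<omega> = (U_cookie x \<omega>, x)"
      by (rule eventually_stopped_walk_eq)
  qed
qed

lemma integrable_U_cookie_sq: "integrable (cookie_space p) (\<lambda>\<omega>. (real (U_cookie x \<omega>))\<^sup>2)"
proof -
  have mono: "mono (\<lambda>n. (real (fst (stopped_walk x n \<omega>)))\<^sup>2)" for \<omega>
    using incseq_stopped_walk_successes[of x \<omega>] by (auto simp: mono_def incseq_def power_mono)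
  have "incseq (\<lambda>n. expectation (\<lambda>\<omega>. (real (fst (stopped_walk x n \<omega>)))\<^sup>2))"
    using mono by (auto simp: incseq_def mono_def intro!: integral_mono integrable_stopped_walk)
  then obtain L where L: "(\<lambda>n. expectation (\<lambda>\<omega>. (real (fst (stopped_walk x n \<omega>)))\<^sup>2)) \<longlonglongrightarrow> L"
    using expectation_successes_sq_le by (meson incseq_convergent)
  show ?thesis
  proof (rule integrable_monotone_convergence[OF integrable_stopped_walk AE_I2[OF mono] _ L])
    show "AE \<omega> in cookie_space p. (\<lambda>n. (real (fst (stopped_walk x n \<omega>)))\<^sup>2) \<longlonglongrightarrow> (real (U_cookie x \<omega>))\<^sup>2"
      using AE_eventually_stopped_walk_eq[of x]
      by eventually_elim (intro tendsto_eventually, elim eventually_mono, simp)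
  qed measurable
qed

lemma expectation_U_cookie_bound:
  assumes "1 \<le> x"
  shows "\<bar>expectation (\<lambda>\<omega>. (real (U_cookie x \<omega>) - real x)\<^sup>2) - 2 * real x\<bar>
    \<le> error_constant * sqrt (real x)"
proof -
  define g where "g n \<omega> = (case stopped_walk x n \<omega> of (s, f) \<Rightarrow> (real s - real f)\<^sup>2 - 2 * real f)"
    for n \<omega>
  define h where "h \<omega> = (real (U_cookie x \<omega>) - real x)\<^sup>2 - 2 * real x" for \<omega>
  have lim: "AE \<omega> in cookie_space p. (\<lambda>n. g n \<omega>) \<longlonglongrightarrow> h \<omega>"
    using AE_eventually_stopped_walk_eq[of x]
    by eventually_elim (intro tendsto_eventually, elim eventually_mono, simp add: g_def h_def)
  have bound: "AE \<omega> in cookie_space p. norm (g n \<omega>) \<le> (real (U_cookie x \<omega>))\<^sup>2 + (real x)\<^sup>2 + 2 * real x"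
    for n
    using AE_eventually_stopped_walk_eq[of x]
  proof eventually_elim
    case (elim \<omega>)
    show ?case
      using abs_position_sq_le[OF stopped_walk_successes_le[OF elim] stopped_walk_failures_le]
      by (simp add: g_def case_prod_beta)
  qed
  have int_h: "integrable (cookie_space p) h" and conv: "(\<lambda>n. expectation (g n)) \<longlonglongrightarrow> expectation h"
    using integrable_U_cookie_sq
    by (auto intro!: integrable_dominated_convergence[OF _ _ _ lim bound]
        integral_dominated_convergence[OF _ _ _ lim bound] simp: g_def h_def)
  have "integrable (cookie_space p) (\<lambda>\<omega>. h \<omega> + 2 * real x)"
    using int_h by (intro Bochner_Integration.integrable_add) simp_all
  then have "expectation h = expectation (\<lambda>\<omega>. (real (U_cookie x \<omega>) - real x)\<^sup>2) - 2 * real x"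
    unfolding h_def by (subst Bochner_Integration.integral_diff) auto
  moreover have "\<bar>expectation h\<bar> \<le> error_constant * sqrt (real x)"
    using expectation_position_sq_bound[OF assms]
    by (intro LIMSEQ_le_const2[OF tendsto_rabs[OF conv]]) (simp add: g_def[abs_def])
  ultimately show ?thesis
    by simp
qed

lemma nu_cookie_bound:
  assumes "1 \<le> x"
  shows "\<bar>nu_cookie p x - 2\<bar> \<le> error_constant / sqrt (real x)"
proof -
  have "\<bar>nu_cookie p x - 2\<bar>
      = \<bar>expectation (\<lambda>\<omega>. (real (U_cookie x \<omega>) - real x)\<^sup>2) - 2 * real x\<bar> / real x"
    using assms by (simp add: nu_cookie_def field_simps)
  also have "\<dots> \<le> error_constant * sqrt (real x) / real x"
    using expectation_U_cookie_bound[OF assms] by (simp add: divide_right_mono)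
  also have "\<dots> = error_constant / (real x / sqrt (real x))"
    by (simp only: divide_divide_eq_right)
  also have "\<dots> = error_constant / sqrt (real x)"
    by (simp add: real_div_sqrt)
  finally show ?thesis .
qed

end

lemma tendsto_of_inverse_sqrt_rate:
  fixes u :: "nat \<Rightarrow> real"
  assumes "\<forall>\<^sub>F x in at_top. \<bar>u x - a\<bar> \<le> C / sqrt (real x)"
  shows "(u \<longlongrightarrow> a) at_top"
proof -
  have "((\<lambda>x. C / sqrt (real x)) \<longlongrightarrow> 0) at_top"
    by (intro tendsto_divide_0[OF tendsto_const] filterlim_at_top_imp_at_infinity
        filterlim_compose[OF sqrt_at_top filterlim_real_sequentially])
  then have "((\<lambda>x. u x - a) \<longlongrightarrow> 0) at_top"
    by (rule Lim_null_comparison[OF assms[unfolded real_norm_def[symmetric]]])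
  then show ?thesis
    by (simp add: LIM_zero_iff)
qed

lemma inverse_sqrt_rate_le_log_rate:
  fixes u :: "nat \<Rightarrow> real"
  assumes "0 \<le> C" and "\<forall>\<^sub>F x in at_top. \<bar>u x - a\<bar> \<le> C / sqrt (real x)"
  shows "\<forall>\<^sub>F x in at_top. \<bar>u x - a\<bar> \<le> C * ln (real x) ^ k / sqrt (real x)"
  using assms(2) eventually_ge_at_top[of "3::nat"]
proof eventually_elim
  case (elim x)
  have "exp 1 \<le> real x"
    using exp_le elim(2) by linarith
  then have "1 \<le> ln (real x)"
    using ln_mono[of "exp 1" "real x"] by simp
  then have "C \<le> C * ln (real x) ^ k"
    using assms(1) one_le_power[of "ln (real x)" k] by (simp add: mult_le_cancel_left1)
  then have "C / sqrt (real x) \<le> C * ln (real x) ^ k / sqrt (real x)"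
    by (simp add: divide_right_mono)
  with elim(1) show ?case
    by linarith
qed

theorem lemma4p2:
  fixes p :: "nat \<Rightarrow> real"
  assumes "\<And>i. 1/2 \<le> p i" and "\<And>i. p i < 1"
    and "summable (\<lambda>i. 2 * p i - 1)"
  shows "(nu_cookie p \<longlongrightarrow> 2) at_top
    \<and> (\<exists>C. \<forall>\<^sub>F x in at_top.
          \<bar>nu_cookie p x - 2\<bar> \<le> C * ln (real x) ^ 4 / sqrt (real x))"
proof -
  interpret finite_drift_environment p
    using assms by unfold_locales (auto simp: drift_def[abs_def] intro: order.trans[of _ "1/2"] less_imp_le)
  have rate: "\<forall>\<^sub>F x in at_top. \<bar>nu_cookie p x - 2\<bar> \<le> error_constant / sqrt (real x)"
    using eventually_ge_at_top[of "1::nat"] by eventually_elim (rule nu_cookie_bound)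
  have "0 \<le> error_constant"
    using total_drift_nonneg by simp
  then show ?thesis
    using tendsto_of_inverse_sqrt_rate[OF rate] inverse_sqrt_rate_le_log_rate[OF _ rate] by blast
qed

end
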